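(* Let $k\ge 2$. For every proper coloring of the gadget $A(k)$ using at most $2k-2$ colors, the gadget is exactly one of row-colorful and column-colorful (i.e., it is row-colorful or column-colorful, but not both).
   Context: The gadget $A(k)$ is the graph with node set $[k]\times[k]$ in which $(i,j)$ and $(i',j')$ are adjacent iff $i\ne i'$ and $j\ne j'$. For $i\in[k]$, the $i$-th row is $\{(i,j):j\in[k]\}$; for $j\in[k]$, the $j$-th column is $\{(i,j):i\in[k]\}$. Given a proper coloring of $A(k)$, a row (resp. column) is colorful if its $k$ nodes receive pairwise distinct colors; the gadget is row-colorful if it has a colorful row and column-colorful if it has a colorful column. *)

theory Defs
  imports Main
begin

text \<open>Gadget A(k): node set [k] x [k], rendered as {0..<k} x {0..<k}.
  (i,j) and (i',j') adjacent iff i ~= i' and j ~= j'.\<close>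

definition gadget_nodes :: "nat \<Rightarrow> (nat \<times> nat) set" where
  "gadget_nodes k = {0..<k} \<times> {0..<k}"

definition gadget_adj :: "nat \<Rightarrow> nat \<times> nat \<Rightarrow> nat \<times> nat \<Rightarrow> bool" where
  "gadget_adj k u v \<longleftrightarrow> u \<in> gadget_nodes k \<and> v \<in> gadget_nodes k
      \<and> fst u \<noteq> fst v \<and> snd u \<noteq> snd v"

definition proper_coloring :: "nat \<Rightarrow> (nat \<times> nat \<Rightarrow> 'c) \<Rightarrow> bool" where
  "proper_coloring k c \<longleftrightarrow> (\<forall>u v. gadget_adj k u v \<longrightarrow> c u \<noteq> c v)"

definition colorful_row :: "nat \<Rightarrow> (nat \<times> nat \<Rightarrow> 'c) \<Rightarrow> nat \<Rightarrow> bool" where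
  "colorful_row k c i \<longleftrightarrow> inj_on (\<lambda>j. c (i, j)) {0..<k}"

definition colorful_col :: "nat \<Rightarrow> (nat \<times> nat \<Rightarrow> 'c) \<Rightarrow> nat \<Rightarrow> bool" where
  "colorful_col k c j \<longleftrightarrow> inj_on (\<lambda>i. c (i, j)) {0..<k}"

definition row_colorful :: "nat \<Rightarrow> (nat \<times> nat \<Rightarrow> 'c) \<Rightarrow> bool" where
  "row_colorful k c \<longleftrightarrow> (\<exists>i\<in>{0..<k}. colorful_row k c i)"

definition column_colorful :: "nat \<Rightarrow> (nat \<times> nat \<Rightarrow> 'c) \<Rightarrow> bool" where
  "column_colorful k c \<longleftrightarrow> (\<exists>j\<in>{0..<k}. colorful_col k c j)"

end

theory Submission
  imports Defs
begin

text \<open>Two nodes of the same colour lie in a common row or column, since otherwise they are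
  adjacent. Hence a colour repeated within row i occurs only in row i: a node of that colour
  outside row i would have to share the column of both repeated nodes.
  If row i and column j are both colourful, their colours overlap only in c(i,j), giving
  2k - 1 colours. If no row and no column is colourful, every row i has a repeated colour,
  confined to row i, and every column j one confined to column j; these 2k colours are
  pairwise distinct. Either way more than 2k - 2 colours are used.\<close>

definition repeated_in_row :: "nat \<Rightarrow> (nat \<times> nat \<Rightarrow> 'c) \<Rightarrow> nat \<Rightarrow> 'c \<Rightarrow> bool" where
  "repeated_in_row k c i x \<longleftrightarrow> (\<exists>j<k. \<exists>j'<k. j \<noteq> j' \<and> c (i, j) = x \<and> c (i, j') = x)"

lemma gadget_nodes_swap: "prod.swap ` gadget_nodes k = gadget_nodes k"
  unfolding gadget_nodes_def by auto

lemma proper_coloring_swap: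
  "proper_coloring k (c \<circ> prod.swap) \<longleftrightarrow> proper_coloring k c"
  unfolding proper_coloring_def gadget_adj_def gadget_nodes_def by force

lemma colorful_col_swap: "colorful_col k c j \<longleftrightarrow> colorful_row k (c \<circ> prod.swap) j"
  unfolding colorful_col_def colorful_row_def by simp

lemma image_coloring_swap: "(c \<circ> prod.swap) ` gadget_nodes k = c ` gadget_nodes k"
  by (metis gadget_nodes_swap image_comp)

lemma proper_coloring_same_line:
  assumes "proper_coloring k c" "u \<in> gadget_nodes k" "v \<in> gadget_nodes k" "c u = c v"
  shows "fst u = fst v \<or> snd u = snd v"
  using assms unfolding proper_coloring_def gadget_adj_def by blast

lemma not_colorful_row_repeated:
  assumes "\<not> colorful_row k c i"
  shows "\<exists>x. repeated_in_row k c i x"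
  using assms unfolding colorful_row_def inj_on_def repeated_in_row_def
  by (metis atLeastLessThan_iff zero_le)

lemma repeated_in_row_confined:
  assumes "proper_coloring k c" "i < k" "repeated_in_row k c i x"
    and "w \<in> gadget_nodes k" "c w = x"
  shows "fst w = i"
proof (rule ccontr)
  assume off_row: "fst w \<noteq> i"
  from assms(3) obtain j j' where "j < k" "j' < k" "j \<noteq> j'" "c (i, j) = x" "c (i, j') = x"
    unfolding repeated_in_row_def by blast
  moreover have "(i, j) \<in> gadget_nodes k" "(i, j') \<in> gadget_nodes k"
    using \<open>i < k\<close> \<open>j < k\<close> \<open>j' < k\<close> unfolding gadget_nodes_def by auto
  ultimately have "snd w = j" "snd w = j'"
    using proper_coloring_same_line[OF assms(1) assms(4)] assms(5) off_row by force+
  with \<open>j \<noteq> j'\<close> show False by simp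
qed

lemma repeated_in_row_inj:
  assumes "proper_coloring k c"
    and "\<And>i. i < k \<Longrightarrow> repeated_in_row k c i (x i)"
  shows "inj_on x {0..<k}"
proof (rule inj_onI)
  fix i i' assume "i \<in> {0..<k}" "i' \<in> {0..<k}" "x i = x i'"
  then obtain j where "j < k" "c (i, j) = x i'"
    using assms(2) unfolding repeated_in_row_def by force
  then show "i = i'"
    using repeated_in_row_confined[OF assms(1) _ assms(2), of i' "(i, j)"]
      \<open>i \<in> {0..<k}\<close> \<open>i' \<in> {0..<k}\<close> unfolding gadget_nodes_def by auto
qed

lemma repeated_in_row_in_image:
  assumes "i < k" "repeated_in_row k c i x"
  shows "x \<in> c ` gadget_nodes k"
  using assms unfolding repeated_in_row_def gadget_nodes_def by force

lemma colorful_row_and_col_card: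
  assumes "proper_coloring k c" "i < k" "j < k" "colorful_row k c i" "colorful_col k c j"
  shows "2 * k - 1 \<le> card (c ` gadget_nodes k)"
proof -
  define A where "A = (\<lambda>j. c (i, j)) ` {0..<k}"
  define B where "B = (\<lambda>i. c (i, j)) ` {0..<k}"
  have "card A = k" "card B = k"
    using assms(4,5) unfolding A_def B_def colorful_row_def colorful_col_def
    by (simp_all add: card_image)
  have "A \<inter> B \<subseteq> {c (i, j)}"
  proof
    fix x assume "x \<in> A \<inter> B"
    then obtain i' j' where "i' < k" "j' < k" "x = c (i, j')" "x = c (i', j)"
      unfolding A_def B_def by auto
    with assms(1-3) show "x \<in> {c (i, j)}"
      using proper_coloring_same_line[of k c "(i, j')" "(i', j)"]
      unfolding gadget_nodes_def by auto
  qed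
  then have "card (A \<inter> B) \<le> 1"
    using card_mono[of "{c (i, j)}"] by simp
  moreover have "A \<union> B \<subseteq> c ` gadget_nodes k"
    using assms(2,3) unfolding A_def B_def gadget_nodes_def by auto
  then have "card (A \<union> B) \<le> card (c ` gadget_nodes k)"
    by (rule card_mono[rotated]) (simp add: gadget_nodes_def)
  moreover have "card A + card B = card (A \<union> B) + card (A \<inter> B)"
    unfolding A_def B_def by (rule card_Un_Int) simp_all
  ultimately show ?thesis
    using \<open>card A = k\<close> \<open>card B = k\<close> by linarith
qed

lemma no_colorful_line_card:
  assumes proper: "proper_coloring k c"
    and "\<not> row_colorful k c" "\<not> column_colorful k c"
  shows "2 * k \<le> card (c ` gadget_nodes k)"
proof -
  let ?d = "c \<circ> prod.swap"
  have proper_d: "proper_coloring k ?d"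
    using proper by (simp add: proper_coloring_swap)
  have "\<forall>i<k. \<exists>x. repeated_in_row k c i x"
    using assms(2) unfolding row_colorful_def by (auto intro: not_colorful_row_repeated)
  then obtain x where x: "\<And>i. i < k \<Longrightarrow> repeated_in_row k c i (x i)"
    by metis
  have "\<forall>j<k. \<exists>y. repeated_in_row k ?d j y"
    using assms(3) unfolding column_colorful_def colorful_col_swap
    by (auto intro: not_colorful_row_repeated)
  then obtain y where y: "\<And>j. j < k \<Longrightarrow> repeated_in_row k ?d j (y j)"
    by metis
  have "x ` {0..<k} \<inter> y ` {0..<k} = {}"
  proof (rule ccontr)
    assume "x ` {0..<k} \<inter> y ` {0..<k} \<noteq> {}"
    then obtain i j where "i < k" "j < k" "x i = y j" by auto
    moreover obtain a b where "a < k" "b < k" "a \<noteq> b" "c (a, j) = y j" "c (b, j) = y j"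
      using y[OF \<open>j < k\<close>] unfolding repeated_in_row_def by auto
    ultimately have "a = i" "b = i"
      using repeated_in_row_confined[OF proper \<open>i < k\<close> x] unfolding gadget_nodes_def
      by (metis fst_conv mem_Sigma_iff atLeastLessThan_iff zero_le)+
    with \<open>a \<noteq> b\<close> show False by simp
  qed
  moreover have "x ` {0..<k} \<union> y ` {0..<k} \<subseteq> c ` gadget_nodes k"
    using repeated_in_row_in_image[OF _ x]
      repeated_in_row_in_image[OF _ y, unfolded image_coloring_swap] by auto
  ultimately have "card (x ` {0..<k}) + card (y ` {0..<k}) \<le> card (c ` gadget_nodes k)"
    by (metis card_Un_disjoint card_mono finite_atLeastLessThan finite_imageI
        finite_SigmaI gadget_nodes_def)
  then show ?thesis
    using repeated_in_row_inj[OF proper x] repeated_in_row_inj[OF proper_d y]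
    by (simp add: card_image)
qed

theorem mainTheorem14:
  fixes k :: nat and c :: "nat \<times> nat \<Rightarrow> 'c"
  assumes "k \<ge> 2"
    and "proper_coloring k c"
    and "card (c ` gadget_nodes k) \<le> 2 * k - 2"
  shows "row_colorful k c \<noteq> column_colorful k c"
proof
  assume same: "row_colorful k c = column_colorful k c"
  show False
  proof (cases "row_colorful k c")
    case True
    then obtain i j where "i < k" "j < k" "colorful_row k c i" "colorful_col k c j"
      using same unfolding row_colorful_def column_colorful_def by auto
    then have "2 * k - 1 \<le> card (c ` gadget_nodes k)"
      using colorful_row_and_col_card assms(2) by blast
    with assms(1,3) show False by linarith
  next
    case False
    then have "2 * k \<le> card (c ` gadget_nodes k)"
      using no_colorful_line_card assms(2) same by blast
    with assms(1,3) show False by linarith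
  qed
qed

end
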